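(* Let $R\ge 1$, let $q^{CAV}_1,\dots,q^{CAV}_R\ge 0$ be route flows with $q^{CAV}=\sum_r q^{CAV}_r>0$, let $t^{CAV}_1,\dots,t^{CAV}_R>0$ be route travel times, and let $(I,di)$ be the space of drivers with total mass $|I|=q^{CAV}$. Then: (i) Every assignment plan $\mu$ defines an offer profile, namely $T^{CAV}_i:=\sum_r t^{CAV}_r\mu(i,r)$. (ii) If $R=2$, then every offer profile $T^{CAV}$ is feasible. Moreover, if $t^{CAV}_1\neq t^{CAV}_2$, the assignment plan inducing $T^{CAV}$ is unique (up to $di$-almost everywhere equality). (iii) If $R\ge 3$, then not every offer profile need be feasible: there exist flows and travel times with three routes and an offer profile subject to them which is not feasible.
   Context: Drivers are indexed by a measure space $(I,di)$ with total mass $|I|=q^{CAV}$: either infinitesimal drivers ($I$ an interval with Lebesgue measure) or atomic drivers ($I=\{1,\dots,q^{CAV}\}$ with counting measure). Given flows $\mathbf q^{CAV}=(q^{CAV}_1,\dots,q^{CAV}_R)$ and travel times $\mathbf t^{CAV}=(t^{CAV}_1,\dots,t^{CAV}_R)$, an offer profile subject to $(\mathbf q^{CAV},\mathbf t^{CAV})$ is a measurable function $T^{CAV}:I\to[\min_r t^{CAV}_r,\max_r t^{CAV}_r]$ with $\frac1{|I|}\int_I T^{CAV}_i\,di=\frac1{q^{CAV}}\sum_r q^{CAV}_r t^{CAV}_r$. An assignment plan inducing $T^{CAV}$ is a measurable $\mu:I\times\{1,\dots,R\}\to[0,1]$ such that $\int_I\mu(i,r)\,di=q^{CAV}_r$ for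 every $r$, $\sum_r\mu(i,r)=1$ for a.e. $i$, and $\sum_r t^{CAV}_r\mu(i,r)=T^{CAV}_i$ for a.e. $i$. An offer profile is feasible if it is induced by at least one assignment plan. *)

theory Defs
  imports "HOL-Analysis.Analysis"
begin

text \<open>Driver space of total mass Q: either infinitesimal drivers (an interval of length Q
  with Lebesgue measure) or atomic drivers (the set 1..Q with counting measure, Q a natural).\<close>
definition driver_space :: "real measure \<Rightarrow> real \<Rightarrow> bool" where
  "driver_space M Q \<longleftrightarrow>
     (\<exists>a. M = restrict_space lebesgue {a..a+Q}) \<or>
     (\<exists>n::nat. Q = real n \<and> M = count_space (real ` {1..n}))"

definition total_flow :: "nat \<Rightarrow> (nat \<Rightarrow> real) \<Rightarrow> real" where
  "total_flow R q = (\<Sum>r=1..R. q r)"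

text \<open>Offer profile subject to (q,t).  Functions are taken up to a.e. equality, so the range
  condition is required almost everywhere.\<close>
definition offer_profile ::
  "'i measure \<Rightarrow> nat \<Rightarrow> (nat \<Rightarrow> real) \<Rightarrow> (nat \<Rightarrow> real) \<Rightarrow> ('i \<Rightarrow> real) \<Rightarrow> bool" where
  "offer_profile M R q t T \<longleftrightarrow>
     T \<in> borel_measurable M \<and>
     (AE i in M. T i \<in> {Min (t ` {1..R}) .. Max (t ` {1..R})}) \<and>
     (1 / measure M (space M)) * (\<integral>i. T i \<partial>M) = (1 / total_flow R q) * (\<Sum>r=1..R. q r * t r)"

definition assignment_plan ::
  "'i measure \<Rightarrow> nat \<Rightarrow> (nat \<Rightarrow> real) \<Rightarrow> ('i \<Rightarrow> nat \<Rightarrow> real) \<Rightarrow> bool" where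
  "assignment_plan M R q \<mu> \<longleftrightarrow>
     (\<forall>r\<in>{1..R}. (\<lambda>i. \<mu> i r) \<in> borel_measurable M) \<and>
     (\<forall>i\<in>space M. \<forall>r\<in>{1..R}. \<mu> i r \<in> {0..1}) \<and>
     (\<forall>r\<in>{1..R}. (\<integral>i. \<mu> i r \<partial>M) = q r) \<and>
     (AE i in M. (\<Sum>r=1..R. \<mu> i r) = 1)"

definition induces ::
  "'i measure \<Rightarrow> nat \<Rightarrow> (nat \<Rightarrow> real) \<Rightarrow> ('i \<Rightarrow> nat \<Rightarrow> real) \<Rightarrow> ('i \<Rightarrow> real) \<Rightarrow> bool" where
  "induces M R t \<mu> T \<longleftrightarrow> (AE i in M. (\<Sum>r=1..R. t r * \<mu> i r) = T i)"

definition feasible ::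
  "'i measure \<Rightarrow> nat \<Rightarrow> (nat \<Rightarrow> real) \<Rightarrow> (nat \<Rightarrow> real) \<Rightarrow> ('i \<Rightarrow> real) \<Rightarrow> bool" where
  "feasible M R q t T \<longleftrightarrow> (\<exists>\<mu>. assignment_plan M R q \<mu> \<and> induces M R t \<mu> T)"

end

theory Submission
  imports Defs
begin

(*
  (i) Pointwise, the induced profile is a convex combination of the route times, hence lies
  between their minimum and maximum; integrating it route by route gives the flow-weighted
  mean.
  (ii) With two distinct times a plan is forced: the share of driver i on route 1 must be
  (T i - t 2) / (t 1 - t 2). This share lies in [0, 1] because T i lies between the two
  times, and its integral is q 1 precisely because of the mean condition. Equal times force
  T to be constant a.e., and the proportional split q r / q works.
  (iii) Take times 1, 2, 3 and put the whole flow 1/2 on route 2; since 1/2 is not an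
  integer, the drivers form an interval of length 1/2. Offering 1 to the first half of the
  drivers and 3 to the second half has the right mean, but route 1 carries no flow, so
  every feasible profile is at least 2 almost everywhere.
*)

lemma driver_space_finite_measure:
  assumes "driver_space M Q" "Q \<ge> 0"
  shows "finite_measure M \<and> measure M (space M) = Q"
proof -
  from assms(1) consider a where "M = restrict_space lebesgue {a..a+Q}"
    | n :: nat where "Q = real n" "M = count_space (real ` {1..n})"
    unfolding driver_space_def by blast
  then show ?thesis
  proof cases
    case 1
    then show ?thesis using assms(2)
      by (auto intro!: finite_measureI simp: emeasure_restrict_space measure_restrict_space
          space_restrict_space)
  next
    case 2
    moreover have "card (real ` {1..n}) = n" by (simp add: card_image)
    ultimately show ?thesis by (simp add: finite_measure_count_space)
  qed
qed

lemma convex_sum_ge: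
  fixes w t :: "'a \<Rightarrow> real"
  assumes "\<forall>r\<in>S. 0 \<le> w r" "sum w S = 1" "\<forall>r\<in>S. w r \<noteq> 0 \<longrightarrow> c \<le> t r"
  shows "c \<le> (\<Sum>r\<in>S. t r * w r)"
proof -
  have "c = (\<Sum>r\<in>S. c * w r)" using assms(2) by (simp add: sum_distrib_left[symmetric])
  also have "\<dots> \<le> (\<Sum>r\<in>S. t r * w r)"
    using assms(1,3) by (intro sum_mono) (metis mult_right_mono mult_zero_right)
  finally show ?thesis .
qed

lemma convex_sum_le:
  fixes w t :: "'a \<Rightarrow> real"
  assumes "\<forall>r\<in>S. 0 \<le> w r" "sum w S = 1" "\<forall>r\<in>S. t r \<le> c"
  shows "(\<Sum>r\<in>S. t r * w r) \<le> c"
proof -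
  have "(\<Sum>r\<in>S. t r * w r) \<le> (\<Sum>r\<in>S. c * w r)"
    using assms(1,3) by (intro sum_mono mult_right_mono) auto
  also have "\<dots> = c" using assms(2) by (simp add: sum_distrib_left[symmetric])
  finally show ?thesis .
qed

lemma sum_one_to_two: "(\<Sum>r\<in>{Suc 0..2}. f r) = f 1 + f 2"
  by (simp add: numeral_2_eq_2)

lemma assignment_plan_integrable:
  assumes "finite_measure M" "assignment_plan M R q \<mu>" "r \<in> {1..R}"
  shows "integrable M (\<lambda>i. \<mu> i r)"
proof (rule finite_measure.integrable_const_bound[OF assms(1), where B=1])
  show "AE i in M. norm (\<mu> i r) \<le> 1"
    using assms(2,3) unfolding assignment_plan_def by (intro AE_I2) auto
qed (use assms(2,3) in \<open>auto simp: assignment_plan_def\<close>)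

lemma assignment_plan_offer_profile:
  assumes "finite_measure M" "measure M (space M) = total_flow R q" "R \<ge> 1"
    and plan: "assignment_plan M R q \<mu>"
  shows "offer_profile M R q t (\<lambda>i. \<Sum>r=1..R. t r * \<mu> i r)"
proof -
  have range: "\<forall>i\<in>space M. \<forall>r\<in>{1..R}. \<mu> i r \<in> {0..1}"
    and sum_one: "AE i in M. (\<Sum>r=1..R. \<mu> i r) = 1"
    using plan unfolding assignment_plan_def by auto
  have "(\<lambda>i. \<Sum>r=1..R. t r * \<mu> i r) \<in> borel_measurable M"
    using plan unfolding assignment_plan_def
    by (intro borel_measurable_sum borel_measurable_times) auto
  moreover have "AE i in M. (\<Sum>r=1..R. t r * \<mu> i r) \<in> {Min (t ` {1..R}) .. Max (t ` {1..R})}"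
    using sum_one
  proof (rule AE_mp[OF _ AE_I2], intro impI)
    fix i assume "i \<in> space M" "(\<Sum>r=1..R. \<mu> i r) = 1"
    then show "(\<Sum>r=1..R. t r * \<mu> i r) \<in> {Min (t ` {1..R}) .. Max (t ` {1..R})}"
      using range convex_sum_ge[of "{1..R}" "\<mu> i" "Min (t ` {1..R})" t]
        convex_sum_le[of "{1..R}" "\<mu> i" t "Max (t ` {1..R})"] by auto
  qed
  moreover have "(\<integral>i. (\<Sum>r=1..R. t r * \<mu> i r) \<partial>M) = (\<Sum>r=1..R. q r * t r)"
    using assignment_plan_integrable[OF assms(1) plan] plan
    by (subst Bochner_Integration.integral_sum) (auto simp: assignment_plan_def mult.commute)
  ultimately show ?thesis unfolding offer_profile_def using assms(2) by simp
qed

lemma offer_profile_integral: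
  assumes "offer_profile M R q t T" "measure M (space M) = total_flow R q" "total_flow R q \<noteq> 0"
  shows "(\<integral>i. T i \<partial>M) = (\<Sum>r=1..R. q r * t r)"
  using assms unfolding offer_profile_def by simp

lemma offer_profile_integrable:
  assumes "finite_measure M" "offer_profile M R q t T"
  shows "integrable M T"
proof (rule finite_measure.integrable_const_bound[OF assms(1),
      where B="\<bar>Min (t ` {1..R})\<bar> + \<bar>Max (t ` {1..R})\<bar>"])
  have "AE i in M. T i \<in> {Min (t ` {1..R}) .. Max (t ` {1..R})}"
    using assms(2) unfolding offer_profile_def by simp
  then show "AE i in M. norm (T i) \<le> \<bar>Min (t ` {1..R})\<bar> + \<bar>Max (t ` {1..R})\<bar>"
    by eventually_elim auto
qed (use assms(2) in \<open>simp add: offer_profile_def\<close>)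

lemma offer_profile_two_routes_AE_between:
  assumes "offer_profile M 2 q t T"
  shows "AE i in M. min (t 1) (t 2) \<le> T i \<and> T i \<le> max (t 1) (t 2)"
proof -
  have "t ` {1..2} = {t 1, t 2}" by (auto simp: numeral_2_eq_2 le_Suc_eq)
  then show ?thesis using assms unfolding offer_profile_def by auto
qed

lemma assignment_plan_two_routesI:
  assumes "finite_measure M" "measure M (space M) = q 1 + q 2"
    and "p \<in> borel_measurable M" "\<forall>i\<in>space M. p i \<in> {0..1}" "(\<integral>i. p i \<partial>M) = q 1"
  shows "assignment_plan M 2 q (\<lambda>i r. if r = 1 then p i else 1 - p i)"
proof -
  have "integrable M p"
    using assms(3,4) by (intro finite_measure.integrable_const_bound[OF assms(1), where B=1]) auto
  then have "(\<integral>i. 1 - p i \<partial>M) = q 2"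
    using assms(1,2,5) by (simp add: finite_measure.integrable_const)
  then show ?thesis
    using assms(3-5) unfolding assignment_plan_def by (auto simp: sum_one_to_two le_Suc_eq numeral_2_eq_2)
qed

lemma feasible_two_routes_equal_times:
  assumes "finite_measure M" "measure M (space M) = total_flow 2 q" "total_flow 2 q > 0"
    and "\<forall>r\<in>{1..2}. q r \<ge> 0" "offer_profile M 2 q t T" "t 1 = t 2"
  shows "feasible M 2 q t T"
proof -
  define p where "p = (\<lambda>i::'a. q 1 / total_flow 2 q)"
  have flow: "total_flow 2 q = q 1 + q 2" by (simp add: total_flow_def sum_one_to_two)
  have "assignment_plan M 2 q (\<lambda>i r. if r = 1 then p i else 1 - p i)"
    using assms(1-4) flow
    by (intro assignment_plan_two_routesI) (auto simp: p_def field_simps)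
  moreover have "AE i in M. T i = t 1"
    using offer_profile_two_routes_AE_between[OF assms(5)]
    by eventually_elim (use assms(6) in auto)
  then have "induces M 2 t (\<lambda>i r. if r = 1 then p i else 1 - p i) T"
    unfolding induces_def by eventually_elim (use assms(6) in \<open>simp add: sum_one_to_two algebra_simps\<close>)
  ultimately show ?thesis unfolding feasible_def by blast
qed

lemma feasible_two_routes_distinct_times:
  assumes "finite_measure M" "measure M (space M) = total_flow 2 q" "total_flow 2 q \<noteq> 0"
    and offer: "offer_profile M 2 q t T" and "t 1 \<noteq> t 2"
  shows "feasible M 2 q t T"
proof -
  \<comment> \<open>Clamped because T lies between the times only a.e., while plans take values in
    [0, 1] everywhere.\<close>
  define p where "p = (\<lambda>i. max 0 (min 1 ((T i - t 2) / (t 1 - t 2))))"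
  have flow: "total_flow 2 q = q 1 + q 2" by (simp add: total_flow_def sum_one_to_two)
  have p_AE: "AE i in M. p i = (T i - t 2) / (t 1 - t 2)"
    using offer_profile_two_routes_AE_between[OF offer]
  proof eventually_elim
    case (elim i)
    have "0 \<le> (T i - t 2) / (t 1 - t 2) \<and> (T i - t 2) / (t 1 - t 2) \<le> 1"
      using elim assms(5) by (cases "t 1 < t 2") (auto simp: divide_simps)
    then show ?case by (simp add: p_def)
  qed
  have T_measurable: "T \<in> borel_measurable M"
    using offer unfolding offer_profile_def by simp
  then have p_measurable: "p \<in> borel_measurable M" unfolding p_def by measurable
  have "(\<integral>i. p i \<partial>M) = (\<integral>i. (T i - t 2) / (t 1 - t 2) \<partial>M)"
    using p_AE p_measurable T_measurable by (intro integral_cong_AE) auto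
  also have "\<dots> = ((\<integral>i. T i \<partial>M) - t 2 * measure M (space M)) / (t 1 - t 2)"
    using offer_profile_integrable[OF assms(1) offer]
    by (simp add: finite_measure.integrable_const[OF assms(1)])
  also have "\<dots> = q 1"
    using offer_profile_integral[OF offer assms(2,3)] assms(2,5) flow
    by (simp add: sum_one_to_two field_simps)
  finally have "assignment_plan M 2 q (\<lambda>i r. if r = 1 then p i else 1 - p i)"
    using assms(1,2) flow p_measurable by (intro assignment_plan_two_routesI) (auto simp: p_def)
  moreover have "induces M 2 t (\<lambda>i r. if r = 1 then p i else 1 - p i) T"
    unfolding induces_def using p_AE
    by eventually_elim (use assms(5) in \<open>simp add: sum_one_to_two field_simps\<close>)
  ultimately show ?thesis unfolding feasible_def by blast
qed

lemma feasible_two_routes: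
  assumes "finite_measure M" "measure M (space M) = total_flow 2 q" "total_flow 2 q > 0"
    and "\<forall>r\<in>{1..2}. q r \<ge> 0" "offer_profile M 2 q t T"
  shows "feasible M 2 q t T"
proof (cases "t 1 = t 2")
  case True
  then show ?thesis by (rule feasible_two_routes_equal_times[OF assms])
next
  case False
  then show ?thesis
    using assms(3) by (intro feasible_two_routes_distinct_times[OF assms(1,2) _ assms(5)]) auto
qed

lemma two_route_plan_determined:
  assumes "t 1 \<noteq> t 2" "assignment_plan M 2 q \<mu>" "induces M 2 t \<mu> T"
  shows "AE i in M. \<mu> i 1 = (T i - t 2) / (t 1 - t 2) \<and> \<mu> i 2 = (t 1 - T i) / (t 1 - t 2)"
proof -
  have "AE i in M. \<mu> i 1 + \<mu> i 2 = 1 \<and> t 1 * \<mu> i 1 + t 2 * \<mu> i 2 = T i"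
    using assms(2,3) unfolding assignment_plan_def induces_def
    by (auto simp: sum_one_to_two)
  then show ?thesis
  proof eventually_elim
    case (elim i)
    then have \<mu>2: "\<mu> i 2 = 1 - \<mu> i 1" by simp
    with elim have "(t 1 - t 2) * \<mu> i 1 = T i - t 2" by (simp add: algebra_simps)
    moreover have nonzero: "t 1 - t 2 \<noteq> 0" using assms(1) by simp
    ultimately have \<mu>1: "\<mu> i 1 = (T i - t 2) / (t 1 - t 2)" by (simp add: field_simps)
    have "\<mu> i 2 = (t 1 - T i) / (t 1 - t 2)"
      unfolding \<mu>2 \<mu>1 using nonzero by (simp add: field_simps)
    with \<mu>1 show ?case ..
  qed
qed

lemma two_route_plans_AE_eq:
  assumes "t 1 \<noteq> t 2"
    and "assignment_plan M 2 q \<mu>" "induces M 2 t \<mu> T"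
    and "assignment_plan M 2 q \<mu>'" "induces M 2 t \<mu>' T"
  shows "AE i in M. \<forall>r\<in>{1..2}. \<mu> i r = \<mu>' i r"
  using two_route_plan_determined[OF assms(1-3)] two_route_plan_determined[OF assms(1,4,5)]
  by eventually_elim (auto simp: numeral_2_eq_2 le_Suc_eq)

lemma assignment_plan_zero_flow_AE:
  assumes "finite_measure M" "assignment_plan M R q \<mu>" "r \<in> {1..R}" "q r = 0"
  shows "AE i in M. \<mu> i r = 0"
proof -
  have "(\<integral>i. \<mu> i r \<partial>M) = 0" and "\<forall>i\<in>space M. 0 \<le> \<mu> i r"
    using assms(2-4) unfolding assignment_plan_def by auto
  then show ?thesis
    using integral_nonneg_eq_0_iff_AE[OF assignment_plan_integrable[OF assms(1-3)]] by auto
qed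

lemma feasible_AE_ge_if_zero_flow:
  assumes "finite_measure M" "feasible M R q t T" "r\<^sub>0 \<in> {1..R}" "q r\<^sub>0 = 0"
    and "\<forall>r\<in>{1..R}. r \<noteq> r\<^sub>0 \<longrightarrow> c \<le> t r"
  shows "AE i in M. c \<le> T i"
proof -
  obtain \<mu> where plan: "assignment_plan M R q \<mu>" and induced: "induces M R t \<mu> T"
    using assms(2) unfolding feasible_def by blast
  have "AE i in M. \<mu> i r\<^sub>0 = 0 \<and> (\<Sum>r=1..R. \<mu> i r) = 1 \<and> (\<Sum>r=1..R. t r * \<mu> i r) = T i"
    using assignment_plan_zero_flow_AE[OF assms(1) plan assms(3,4)] plan induced
    unfolding assignment_plan_def induces_def by auto
  moreover have "AE i in M. i \<in> space M" by simp
  ultimately show ?thesis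
  proof eventually_elim
    case (elim i)
    then have "c \<le> (\<Sum>r=1..R. t r * \<mu> i r)"
      using plan assms(5) unfolding assignment_plan_def by (intro convex_sum_ge) auto
    with elim show ?case by simp
  qed
qed

definition counterexample_flow :: "nat \<Rightarrow> real" where
  "counterexample_flow r = (if r = 2 then 1/2 else 0)"

definition counterexample_time :: "nat \<Rightarrow> real" where
  "counterexample_time r = real (min r 3)"

definition counterexample_offer :: "real \<Rightarrow> real \<Rightarrow> real" where
  "counterexample_offer a i = (if i \<in> {a..a+1/4} then 1 else 3)"

lemma total_flow_counterexample: "R \<ge> 2 \<Longrightarrow> total_flow R counterexample_flow = 1/2"
  unfolding total_flow_def counterexample_flow_def by (subst sum.delta) auto

lemma offer_profile_counterexample:
  assumes "R \<ge> 3"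
  shows "offer_profile (restrict_space lebesgue {a..a+1/2}) R
           counterexample_flow counterexample_time (counterexample_offer a)"
proof -
  let ?M = "restrict_space lebesgue {a..a+1/2}"
  have offer: "counterexample_offer a = (\<lambda>i. 3 - 2 * indicator {a..a+1/4} i)"
    by (auto simp: counterexample_offer_def indicator_def)
  interpret finite_measure ?M
    by (auto intro!: finite_measureI simp: emeasure_restrict_space space_restrict_space)
  have space: "measure ?M (space ?M) = 1/2"
    by (simp add: measure_restrict_space space_restrict_space)
  have quarter: "{a..a+1/4} \<in> sets ?M" "measure ?M {a..a+1/4} = 1/4"
    by (auto simp: sets_restrict_space_iff measure_restrict_space)
  have measurable: "counterexample_offer a \<in> borel_measurable ?M"
    unfolding offer using quarter(1) by measurable
  have "integrable ?M (indicator {a..a+1/4} :: real \<Rightarrow> real)"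
    using quarter by (simp add: emeasure_eq_measure)
  then have integral: "(\<integral>i. counterexample_offer a i \<partial>?M) = 1"
    using quarter space sets.sets_into_space[OF quarter(1)] by (simp add: offer Int_absorb2)
  have "(\<Sum>r=1..R. counterexample_flow r * counterexample_time r) =
      (\<Sum>r=1..R. if r = 2 then 1 else 0)"
    by (intro sum.cong) (auto simp: counterexample_flow_def counterexample_time_def)
  then have weighted_time: "(\<Sum>r=1..R. counterexample_flow r * counterexample_time r) = 1"
    using assms by simp
  have "Min (counterexample_time ` {1..R}) \<le> counterexample_time 1"
    "counterexample_time 3 \<le> Max (counterexample_time ` {1..R})"
    using assms by (auto intro: Min_le Max_ge)
  then have "counterexample_offer a i \<in> {Min (counterexample_time ` {1..R}) ..
      Max (counterexample_time ` {1..R})}" for i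
    by (simp add: counterexample_offer_def counterexample_time_def)
  then show ?thesis
    unfolding offer_profile_def
    using measurable integral weighted_time space total_flow_counterexample[of R] assms by simp
qed

lemma not_feasible_counterexample:
  assumes "R \<ge> 1"
  shows "\<not> feasible (restrict_space lebesgue {a..a+1/2}) R
           counterexample_flow counterexample_time (counterexample_offer a)"
proof
  let ?M = "restrict_space lebesgue {a..a+1/2}"
  assume feasible: "feasible ?M R counterexample_flow counterexample_time (counterexample_offer a)"
  have "finite_measure ?M"
    by (auto intro!: finite_measureI simp: emeasure_restrict_space space_restrict_space)
  then have "AE i in ?M. 2 \<le> counterexample_offer a i"
    by (rule feasible_AE_ge_if_zero_flow[OF _ feasible, where r\<^sub>0=1])
      (use assms in \<open>auto simp: counterexample_flow_def counterexample_time_def\<close>)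
  then have "AE i in ?M. i \<notin> {a..a+1/4}"
    by eventually_elim (auto simp: counterexample_offer_def)
  moreover have "{a..a+1/4} \<in> sets ?M" "emeasure ?M {a..a+1/4} \<noteq> 0"
    by (auto simp: sets_restrict_space_iff emeasure_restrict_space)
  ultimately show False
    using AE_iff_measurable[of "{a..a+1/4}" ?M "\<lambda>i. i \<notin> {a..a+1/4}"]
      sets.sets_into_space by blast
qed

lemma counterexample_infeasible_offer_profile:
  assumes "R \<ge> 3" "driver_space M (total_flow R counterexample_flow)"
  shows "\<exists>T. offer_profile M R counterexample_flow counterexample_time T \<and>
           \<not> feasible M R counterexample_flow counterexample_time T"
proof -
  have "(1/2 :: real) \<noteq> real n" for n by (cases n) auto
  moreover have flow: "total_flow R counterexample_flow = 1/2"
    using assms(1) by (intro total_flow_counterexample) simp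
  ultimately obtain a where "M = restrict_space lebesgue {a..a+1/2}"
    using assms(2) unfolding driver_space_def flow by auto
  moreover have "R \<ge> 1" using assms(1) by simp
  ultimately show ?thesis
    using offer_profile_counterexample[OF assms(1)] not_feasible_counterexample by blast
qed

theorem proposition1:
  fixes R :: nat and q t :: "nat \<Rightarrow> real" and M :: "real measure"
  assumes "R \<ge> 1"
    and "\<forall>r\<in>{1..R}. q r \<ge> 0"
    and "total_flow R q > 0"
    and "\<forall>r\<in>{1..R}. t r > 0"
    and "driver_space M (total_flow R q)"
  shows
    "(\<forall>\<mu>. assignment_plan M R q \<mu> \<longrightarrow>
          offer_profile M R q t (\<lambda>i. \<Sum>r=1..R. t r * \<mu> i r))
   \<and> (R = 2 \<longrightarrow>
        (\<forall>T. offer_profile M R q t T \<longrightarrow> feasible M R q t T) \<and>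
        (t 1 \<noteq> t 2 \<longrightarrow>
           (\<forall>T \<mu> \<mu>'. assignment_plan M R q \<mu> \<and> induces M R t \<mu> T \<and>
                    assignment_plan M R q \<mu>' \<and> induces M R t \<mu>' T \<longrightarrow>
                    (AE i in M. \<forall>r\<in>{1..R}. \<mu> i r = \<mu>' i r))))
   \<and> (R \<ge> 3 \<longrightarrow>
        (\<exists>q' t' :: nat \<Rightarrow> real.
           (\<forall>r\<in>{1..R}. q' r \<ge> 0) \<and> total_flow R q' > 0 \<and> (\<forall>r\<in>{1..R}. t' r > 0) \<and>
           (\<forall>M' :: real measure. driver_space M' (total_flow R q') \<longrightarrow>
              (\<exists>T. offer_profile M' R q' t' T \<and> \<not> feasible M' R q' t' T))))"
proof -
  have finite: "finite_measure M" and space: "measure M (space M) = total_flow R q"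
    using driver_space_finite_measure[OF assms(5)] assms(3) by auto
  show ?thesis
  proof (intro conjI allI impI)
    fix \<mu> assume "assignment_plan M R q \<mu>"
    then show "offer_profile M R q t (\<lambda>i. \<Sum>r=1..R. t r * \<mu> i r)"
      using assignment_plan_offer_profile finite space assms(1) by blast
  next
    fix T assume "R = 2" "offer_profile M R q t T"
    then show "feasible M R q t T"
      using feasible_two_routes finite space assms(2,3) by blast
  next
    fix T \<mu> \<mu>' assume "R = 2" "t 1 \<noteq> t 2"
      "assignment_plan M R q \<mu> \<and> induces M R t \<mu> T \<and>
       assignment_plan M R q \<mu>' \<and> induces M R t \<mu>' T"
    then show "AE i in M. \<forall>r\<in>{1..R}. \<mu> i r = \<mu>' i r"
      using two_route_plans_AE_eq by blast
  next
    assume "R \<ge> 3"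
    then show "\<exists>q' t' :: nat \<Rightarrow> real.
           (\<forall>r\<in>{1..R}. q' r \<ge> 0) \<and> total_flow R q' > 0 \<and> (\<forall>r\<in>{1..R}. t' r > 0) \<and>
           (\<forall>M' :: real measure. driver_space M' (total_flow R q') \<longrightarrow>
              (\<exists>T. offer_profile M' R q' t' T \<and> \<not> feasible M' R q' t' T))"
      using counterexample_infeasible_offer_profile total_flow_counterexample[of R]
      by (intro exI[of _ counterexample_flow] exI[of _ counterexample_time])
        (auto simp: counterexample_flow_def counterexample_time_def)
  qed
qed

end
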